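(* Let $E$ be a pseudo effect algebra satisfying (RDP). Then $\mathcal J(E)$ is an Abelian Dedekind complete lattice-ordered real vector space (Riesz space) under $\le^+$, and for any $m_1,\dots,m_n\in\mathcal J(E)$ and every $x\in E$: $$\Big(\bigvee_{i=1}^n m_i\Big)(x)=\sup\{m_1(x_1)+\cdots+m_n(x_n):\ x=x_1+\cdots+x_n,\ x_1,\dots,x_n\in E\},$$ $$\Big(\bigwedge_{i=1}^n m_i\Big)(x)=\inf\{m_1(x_1)+\cdots+m_n(x_n):\ x=x_1+\cdots+x_n,\ x_1,\dots,x_n\in E\}.$$
   Context: Pseudo effect algebra: partial algebra $(E;+,0,1)$ such that for all $a,b,c$: (i) $a+b$ and $(a+b)+c$ exist iff $b+c$ and $a+(b+c)$ exist, and then they are equal; (ii) there is exactly one $d$ and one $e$ with $a+d=e+a=1$; (iii) if $a+b$ exists there are $d,e$ with $a+b=d+a=b+e$; (iv) if $1+a$ or $a+1$ exists then $a=0$. (RDP): whenever $a_1+a_2=b_1+b_2$ there are $d_1,\dots,d_4$ with $d_1+d_2=a_1$, $d_3+d_4=a_2$, $d_1+d_3=b_1$, $d_2+d_4=b_2$. A signed measure is $m:E\to\mathbb R$ additive on defined sums; a measure is a nonnegative signed measure; $m_1\le^+m_2$ iff $m_2-m_1$ is a measure. $\mathcal J(E)$ is the set of signed measures that are differences of two measures, with pointwise operations. *)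

theory Defs
  imports Complex_Main "HOL-Library.Function_Algebras"
begin

text \<open>A pseudo effect algebra on the carrier type 'a: partial addition
  given as a function into 'a option (None = undefined), with zero and one.\<close>

definition pea :: "('a \<Rightarrow> 'a \<Rightarrow> 'a option) \<Rightarrow> 'a \<Rightarrow> 'a \<Rightarrow> bool" where
  "pea p z u \<longleftrightarrow>
     (\<forall>a b c. Option.bind (p a b) (\<lambda>ab. p ab c) = Option.bind (p b c) (\<lambda>bc. p a bc)) \<and>
     (\<forall>a. (\<exists>!d. p a d = Some u) \<and> (\<exists>!e. p e a = Some u)) \<and>
     (\<forall>a b s. p a b = Some s \<longrightarrow> (\<exists>d e. p d a = Some s \<and> p b e = Some s)) \<and>
     (\<forall>a. (p u a \<noteq> None \<or> p a u \<noteq> None) \<longrightarrow> a = z)"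

definition RDP :: "('a \<Rightarrow> 'a \<Rightarrow> 'a option) \<Rightarrow> bool" where
  "RDP p \<longleftrightarrow> (\<forall>a1 a2 b1 b2 s. p a1 a2 = Some s \<and> p b1 b2 = Some s \<longrightarrow>
     (\<exists>d1 d2 d3 d4. p d1 d2 = Some a1 \<and> p d3 d4 = Some a2 \<and>
                    p d1 d3 = Some b1 \<and> p d2 d4 = Some b2))"

definition signed_measure :: "('a \<Rightarrow> 'a \<Rightarrow> 'a option) \<Rightarrow> ('a \<Rightarrow> real) \<Rightarrow> bool" where
  "signed_measure p m \<longleftrightarrow> (\<forall>a b s. p a b = Some s \<longrightarrow> m s = m a + m b)"

definition pmeasure :: "('a \<Rightarrow> 'a \<Rightarrow> 'a option) \<Rightarrow> ('a \<Rightarrow> real) \<Rightarrow> bool" where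
  "pmeasure p m \<longleftrightarrow> signed_measure p m \<and> (\<forall>x. 0 \<le> m x)"

definition le_plus :: "('a \<Rightarrow> 'a \<Rightarrow> 'a option) \<Rightarrow> ('a \<Rightarrow> real) \<Rightarrow> ('a \<Rightarrow> real) \<Rightarrow> bool" where
  "le_plus p m1 m2 \<longleftrightarrow> pmeasure p (m2 - m1)"

definition JJ :: "('a \<Rightarrow> 'a \<Rightarrow> 'a option) \<Rightarrow> ('a \<Rightarrow> real) set" where
  "JJ p = {m. \<exists>m1 m2. pmeasure p m1 \<and> pmeasure p m2 \<and> m = m1 - m2}"

text \<open>Iterated partial sum x1 + ... + xn (left-bracketed; undefined for the empty list).\<close>
fun psum :: "('a \<Rightarrow> 'a \<Rightarrow> 'a option) \<Rightarrow> 'a list \<Rightarrow> 'a option" where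
  "psum p [] = None"
| "psum p (x # xs) = foldl (\<lambda>acc y. Option.bind acc (\<lambda>a. p a y)) (Some x) xs"

definition is_lub_in :: "('b \<Rightarrow> 'b \<Rightarrow> bool) \<Rightarrow> 'b set \<Rightarrow> 'b set \<Rightarrow> 'b \<Rightarrow> bool" where
  "is_lub_in le J S l \<longleftrightarrow> l \<in> J \<and> (\<forall>s\<in>S. le s l) \<and> (\<forall>u\<in>J. (\<forall>s\<in>S. le s u) \<longrightarrow> le l u)"

definition is_glb_in :: "('b \<Rightarrow> 'b \<Rightarrow> bool) \<Rightarrow> 'b set \<Rightarrow> 'b set \<Rightarrow> 'b \<Rightarrow> bool" where
  "is_glb_in le J S l \<longleftrightarrow> l \<in> J \<and> (\<forall>s\<in>S. le l s) \<and> (\<forall>u\<in>J. (\<forall>s\<in>S. le u s) \<longrightarrow> le u l)"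

definition riesz_space :: "('a \<Rightarrow> real) set \<Rightarrow> (('a \<Rightarrow> real) \<Rightarrow> ('a \<Rightarrow> real) \<Rightarrow> bool) \<Rightarrow> bool" where
  "riesz_space J le \<longleftrightarrow>
     0 \<in> J \<and> (\<forall>f\<in>J. \<forall>g\<in>J. f + g \<in> J) \<and> (\<forall>f\<in>J. \<forall>c::real. (\<lambda>x. c * f x) \<in> J) \<and>
     (\<forall>f\<in>J. \<forall>g\<in>J. f + g = g + f) \<and>
     (\<forall>f\<in>J. le f f) \<and>
     (\<forall>f\<in>J. \<forall>g\<in>J. le f g \<and> le g f \<longrightarrow> f = g) \<and>
     (\<forall>f\<in>J. \<forall>g\<in>J. \<forall>h\<in>J. le f g \<and> le g h \<longrightarrow> le f h) \<and>
     (\<forall>f\<in>J. \<forall>g\<in>J. \<forall>h\<in>J. le f g \<longrightarrow> le (f + h) (g + h)) \<and>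
     (\<forall>f\<in>J. \<forall>g\<in>J. \<forall>c::real. 0 \<le> c \<and> le f g \<longrightarrow> le (\<lambda>x. c * f x) (\<lambda>x. c * g x)) \<and>
     (\<forall>f\<in>J. \<forall>g\<in>J. (\<exists>l. is_lub_in le J {f, g} l) \<and> (\<exists>l. is_glb_in le J {f, g} l))"

definition dedekind_complete :: "('b \<Rightarrow> 'b \<Rightarrow> bool) \<Rightarrow> 'b set \<Rightarrow> bool" where
  "dedekind_complete le J \<longleftrightarrow>
     (\<forall>S. S \<subseteq> J \<and> S \<noteq> {} \<and> (\<exists>u\<in>J. \<forall>s\<in>S. le s u) \<longrightarrow> (\<exists>l. is_lub_in le J S l))"

end

theory Submission
  imports Defs
begin

text \<open>
  Everything is reduced to pointwise reasoning: on signed measures the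
  order le_plus is the pointwise order, and a signed measure lying above an element of
  J(E) belongs to J(E).
\<close>

lemma pea_assoc_left:
  assumes "pea p z u" "p a b = Some ab" "p ab c = Some s"
  shows "\<exists>bc. p b c = Some bc \<and> p a bc = Some s"
proof -
  have "Option.bind (p a b) (\<lambda>ab. p ab c) = Option.bind (p b c) (\<lambda>bc. p a bc)"
    using assms(1) unfolding pea_def by blast
  with assms(2,3) show ?thesis by (cases "p b c") auto
qed

lemma pea_assoc_right:
  assumes "pea p z u" "p b c = Some bc" "p a bc = Some s"
  shows "\<exists>ab. p a b = Some ab \<and> p ab c = Some s"
proof -
  have "Option.bind (p a b) (\<lambda>ab. p ab c) = Option.bind (p b c) (\<lambda>bc. p a bc)"
    using assms(1) unfolding pea_def by blast
  with assms(2,3) show ?thesis by (cases "p a b") auto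
qed

lemma pea_zero_right:
  assumes pea: "pea p z u"
  shows "p x z = Some x"
proof -
  obtain e where e: "p e x = Some u" using pea unfolding pea_def by blast
  obtain d where d: "p u d = Some u" using pea unfolding pea_def by blast
  have "d = z" using pea d unfolding pea_def by blast
  with pea_assoc_left[OF pea e] d obtain w where w: "p x z = Some w" "p e w = Some u"
    by blast
  have "\<exists>!d. p e d = Some u" using pea unfolding pea_def by blast
  with w(2) e have "w = x" by blast
  with w(1) show ?thesis by simp
qed

lemma pea_zero_left:
  assumes pea: "pea p z u"
  shows "p z x = Some x"
proof -
  obtain d where d: "p x d = Some u" using pea unfolding pea_def by blast
  obtain e where e: "p e u = Some u" using pea unfolding pea_def by blast
  have "e = z" using pea e unfolding pea_def by blast
  with pea_assoc_right[OF pea d] e obtain w where w: "p z x = Some w" "p w d = Some u"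
    by blast
  have "\<exists>!e. p e d = Some u" using pea unfolding pea_def by blast
  with w(2) d have "w = x" by blast
  with w(1) show ?thesis by simp
qed

lemma sm_add: "signed_measure p m \<Longrightarrow> p a b = Some s \<Longrightarrow> m s = m a + m b"
  unfolding signed_measure_def by blast

lemma sm_zero: "pea p z u \<Longrightarrow> signed_measure p m \<Longrightarrow> m z = 0"
  using sm_add[of p m z z z] pea_zero_right[of p z u z] by simp

(* Regrouping (a1 + a2) + (b1 + b2) as (a1 + b1) + (e + b2) with e carrying the same
  measure as a2; this replaces the missing commutativity in the superadditivity step. *)
lemma pea_regroup:
  assumes pea: "pea p z u"
    and a: "p a1 a2 = Some a" and b: "p b1 b2 = Some b" and c: "p a b = Some c"
  shows "\<exists>k e q. p a1 b1 = Some k \<and> p e b2 = Some q \<and> p k q = Some c \<and>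
           (\<forall>\<mu>. signed_measure p \<mu> \<longrightarrow> \<mu> e = \<mu> a2)"
proof -
  obtain r where r: "p a2 b = Some r" "p a1 r = Some c" using pea_assoc_left[OF pea a c] by blast
  obtain t where t: "p a2 b1 = Some t" "p t b2 = Some r" using pea_assoc_right[OF pea b r(1)] by blast
  obtain e where e: "p b1 e = Some t" using pea t(1) unfolding pea_def by blast
  obtain q where q: "p e b2 = Some q" "p b1 q = Some r" using pea_assoc_left[OF pea e t(2)] by blast
  obtain k where k: "p a1 b1 = Some k" "p k q = Some c" using pea_assoc_right[OF pea q(2) r(2)] by blast
  have "\<mu> e = \<mu> a2" if "signed_measure p \<mu>" for \<mu>
    using sm_add[OF that e] sm_add[OF that t(1)] by simp
  with k q show ?thesis by blast
qed

lemma psum_snoc: "xs \<noteq> [] \<Longrightarrow> psum p (xs @ [y]) = Option.bind (psum p xs) (\<lambda>a. p a y)"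
  by (cases xs) auto

lemma psum_pad_zero:
  assumes "pea p z u"
  shows "psum p (x # replicate k z) = Some x"
proof (induction k)
  case (Suc k)
  have "x # replicate (Suc k) z = (x # replicate k z) @ [z]"
    by (simp add: replicate_append_same)
  then show ?case using Suc psum_snoc[of "x # replicate k z" p z] pea_zero_right[OF assms]
    by simp
qed simp

lemma psum_measure:
  assumes "signed_measure p v" "psum p xs = Some x"
  shows "v x = (\<Sum>i<length xs. v (xs ! i))"
  using assms(2)
proof (induction xs arbitrary: x rule: rev_induct)
  case (snoc y xs)
  show ?case
  proof (cases "xs = []")
    case False
    with snoc.prems obtain a where a: "psum p xs = Some a" "p a y = Some x"
      by (cases "psum p xs") (auto simp: psum_snoc)
    have "v x = v a + v y" using sm_add[OF assms(1) a(2)] .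
    also have "v a = (\<Sum>i<length xs. v ((xs @ [y]) ! i))"
      using snoc.IH[OF a(1)] by (simp add: nth_append)
    finally show ?thesis by simp
  qed (use snoc in simp)
qed simp

lemma pmeasure_sm: "pmeasure p m \<Longrightarrow> signed_measure p m"
  unfolding pmeasure_def by blast

lemma sm_diff: "signed_measure p f \<Longrightarrow> signed_measure p g \<Longrightarrow> signed_measure p (f - g)"
  unfolding signed_measure_def by auto

lemma pmeasure_plus: "pmeasure p f \<Longrightarrow> pmeasure p g \<Longrightarrow> pmeasure p (f + g)"
  unfolding pmeasure_def signed_measure_def by (auto intro: add_nonneg_nonneg)

lemma pmeasure_scale: "pmeasure p f \<Longrightarrow> 0 \<le> c \<Longrightarrow> pmeasure p (\<lambda>x. c * f x)"
  unfolding pmeasure_def signed_measure_def by (auto simp: algebra_simps)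

lemma pmeasure_mono: "pmeasure p f \<Longrightarrow> p a b = Some x \<Longrightarrow> f a \<le> f x \<and> f b \<le> f x"
  unfolding pmeasure_def signed_measure_def by force

lemma le_plus_iff:
  "signed_measure p f \<Longrightarrow> signed_measure p g \<Longrightarrow> le_plus p f g \<longleftrightarrow> (\<forall>x. f x \<le> g x)"
  unfolding le_plus_def pmeasure_def using sm_diff by auto

lemma le_plus_refl: "le_plus p f f"
  unfolding le_plus_def pmeasure_def signed_measure_def by simp

lemma le_plus_trans: "le_plus p f g \<Longrightarrow> le_plus p g h \<Longrightarrow> le_plus p f h"
proof -
  assume "le_plus p f g" "le_plus p g h"
  moreover have "h - f = (h - g) + (g - f)" by simp
  ultimately show ?thesis unfolding le_plus_def using pmeasure_plus by metis
qed

lemma le_plus_uminus: "le_plus p (- f) (- g) \<longleftrightarrow> le_plus p g f"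
proof -
  have "- g - - f = f - g" by simp
  then show ?thesis unfolding le_plus_def by simp
qed

lemma JJ_sm: "f \<in> JJ p \<Longrightarrow> signed_measure p f"
  unfolding JJ_def using pmeasure_sm sm_diff by blast

lemma le_plus_JJ: "f \<in> JJ p \<Longrightarrow> g \<in> JJ p \<Longrightarrow> le_plus p f g \<longleftrightarrow> (\<forall>x. f x \<le> g x)"
  using le_plus_iff JJ_sm by blast

lemma JJ_zero: "0 \<in> JJ p"
proof -
  have "pmeasure p 0" unfolding pmeasure_def signed_measure_def by simp
  moreover have "(0 :: 'a \<Rightarrow> real) = 0 - 0" by simp
  ultimately show ?thesis unfolding JJ_def by blast
qed

lemma JJ_plus: "f \<in> JJ p \<Longrightarrow> g \<in> JJ p \<Longrightarrow> f + g \<in> JJ p"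
proof -
  assume "f \<in> JJ p" "g \<in> JJ p"
  then obtain f1 f2 g1 g2 where f: "pmeasure p f1" "pmeasure p f2" "f = f1 - f2"
    and g: "pmeasure p g1" "pmeasure p g2" "g = g1 - g2" unfolding JJ_def by blast
  have "f + g = (f1 + g1) - (f2 + g2)" by (simp add: f(3) g(3))
  then show ?thesis unfolding JJ_def using pmeasure_plus f g by blast
qed

lemma JJ_uminus: "f \<in> JJ p \<Longrightarrow> - f \<in> JJ p"
proof -
  assume "f \<in> JJ p"
  then obtain f1 f2 where "pmeasure p f1" "pmeasure p f2" "f = f1 - f2" unfolding JJ_def by blast
  moreover have "- (f1 - f2) = f2 - f1" by simp
  ultimately show ?thesis unfolding JJ_def by auto
qed

lemma JJ_scale: "f \<in> JJ p \<Longrightarrow> (\<lambda>x. c * f x) \<in> JJ p"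
proof -
  assume "f \<in> JJ p"
  then obtain f1 f2 where f: "pmeasure p f1" "pmeasure p f2" "f = f1 - f2" unfolding JJ_def by blast
  show ?thesis
  proof (cases "0 \<le> c")
    case True
    have "(\<lambda>x. c * f x) = (\<lambda>x. c * f1 x) - (\<lambda>x. c * f2 x)" by (simp add: f(3) fun_eq_iff algebra_simps)
    then show ?thesis unfolding JJ_def using pmeasure_scale f True by blast
  next
    case False
    have "(\<lambda>x. c * f x) = (\<lambda>x. (-c) * f2 x) - (\<lambda>x. (-c) * f1 x)" by (simp add: f(3) fun_eq_iff algebra_simps)
    moreover have "0 \<le> -c" using False by simp
    ultimately show ?thesis unfolding JJ_def using pmeasure_scale f by blast
  qed
qed

lemma JJ_of_le:
  assumes "signed_measure p h" "f \<in> JJ p" "\<And>x. f x \<le> h x"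
  shows "h \<in> JJ p"
proof -
  obtain f1 f2 where f: "pmeasure p f1" "pmeasure p f2" "f = f1 - f2" using assms(2) unfolding JJ_def by blast
  have "pmeasure p (h - f)" unfolding pmeasure_def
    using sm_diff[OF assms(1) JJ_sm[OF assms(2)]] assms(3) by auto
  then have "pmeasure p ((h - f) + f1)" using pmeasure_plus f by blast
  moreover have "h = ((h - f) + f1) - f2" using f by simp
  ultimately show ?thesis using f unfolding JJ_def by blast
qed

lemma JJ_dominated:
  assumes "f \<in> JJ p" obtains f1 where "pmeasure p f1" "\<And>x. f x \<le> f1 x"
proof -
  obtain f1 f2 where "pmeasure p f1" "pmeasure p f2" "f = f1 - f2" using assms unfolding JJ_def by blast
  then have "f x \<le> f1 x" for x unfolding pmeasure_def by simp
  with \<open>pmeasure p f1\<close> show ?thesis using that by blast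
qed

lemma Sup_add_le:
  fixes A B :: "real set"
  assumes "A \<noteq> {}" "B \<noteq> {}" "\<And>a b. a \<in> A \<Longrightarrow> b \<in> B \<Longrightarrow> a + b \<le> c"
  shows "Sup A + Sup B \<le> c"
proof -
  have "a \<le> c - Sup B" if "a \<in> A" for a
    using cSup_least[OF assms(2), of "c - a"] assms(3)[OF that] by fastforce
  then have "Sup A \<le> c - Sup B" by (rule cSup_least[OF assms(1)])
  then show ?thesis by simp
qed

lemma is_lub_in_upper_bounds_cong:
  assumes "is_lub_in le J A l" "\<And>v. v \<in> J \<Longrightarrow> (\<forall>a\<in>A. le a v) \<longleftrightarrow> (\<forall>b\<in>B. le b v)"
  shows "is_lub_in le J B l"
  using assms unfolding is_lub_in_def by blast

lemma lub_insert:
  assumes "is_lub_in (le_plus p) J F l" "is_lub_in (le_plus p) J {x, l} l'"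
  shows "is_lub_in (le_plus p) J (insert x F) l'"
  unfolding is_lub_in_def
proof (intro conjI ballI impI)
  show "l' \<in> J" using assms(2) unfolding is_lub_in_def by blast
  have "le_plus p x l'" "le_plus p l l'" using assms(2) unfolding is_lub_in_def by auto
  then show "le_plus p s l'" if "s \<in> insert x F" for s
    using that assms(1) le_plus_trans unfolding is_lub_in_def by blast
  show "le_plus p l' v" if "v \<in> J" "\<forall>s\<in>insert x F. le_plus p s v" for v
    using that assms unfolding is_lub_in_def by simp
qed

lemma glb_of_lub_uminus:
  assumes "is_lub_in (le_plus p) (JJ p) (uminus ` S) l"
  shows "is_glb_in (le_plus p) (JJ p) S (- l)"
  unfolding is_glb_in_def
proof (intro conjI ballI impI)
  have lJ: "l \<in> JJ p" and up: "\<And>s. s \<in> S \<Longrightarrow> le_plus p (- s) l"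
    and least: "\<And>v. v \<in> JJ p \<Longrightarrow> \<forall>s\<in>S. le_plus p (- s) v \<Longrightarrow> le_plus p l v"
    using assms unfolding is_lub_in_def by auto
  show "- l \<in> JJ p" using JJ_uminus[OF lJ] .
  show "le_plus p (- l) s" if "s \<in> S" for s
    using up[OF that] le_plus_uminus[of p s "- l"] by simp
  show "le_plus p v (- l)" if "v \<in> JJ p" "\<forall>s\<in>S. le_plus p v s" for v
    using least[OF JJ_uminus[OF that(1)]] that(2) le_plus_uminus[of p _ v] le_plus_uminus[of p "- l" v]
    by simp
qed

definition split_sums :: "('a \<Rightarrow> 'a \<Rightarrow> 'a option) \<Rightarrow> ('a \<Rightarrow> real) \<Rightarrow> ('a \<Rightarrow> real) \<Rightarrow> 'a \<Rightarrow> real set" where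
  "split_sums p f g x = {f a + g b | a b. p a b = Some x}"

lemma split_sums_mem: "p a b = Some x \<Longrightarrow> f a + g b \<in> split_sums p f g x"
  unfolding split_sums_def by blast

lemma split_sums_nonempty: "pea p z u \<Longrightarrow> split_sums p f g x \<noteq> {}"
  using split_sums_mem[of p x z x f g] pea_zero_right[of p z u x] by blast

lemma split_sums_bdd:
  assumes "f \<in> JJ p" "g \<in> JJ p"
  shows "bdd_above (split_sums p f g x)"
proof -
  obtain f1 where f1: "pmeasure p f1" "\<And>x. f x \<le> f1 x" using JJ_dominated[OF assms(1)] by blast
  obtain g1 where g1: "pmeasure p g1" "\<And>x. g x \<le> g1 x" using JJ_dominated[OF assms(2)] by blast
  have "e \<le> f1 x + g1 x" if e: "e \<in> split_sums p f g x" for e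
  proof -
    obtain a b where ab: "p a b = Some x" "e = f a + g b" using e unfolding split_sums_def by blast
    show ?thesis using ab f1(2)[of a] g1(2)[of b] pmeasure_mono[OF f1(1) ab(1)] pmeasure_mono[OF g1(1) ab(1)]
      by linarith
  qed
  then show ?thesis by (rule bdd_aboveI)
qed

(* The pointwise supremum of the binary decomposition sums is additive:
  subadditivity by (RDP), superadditivity by regrouping. *)
lemma split_sums_sup_additive:
  assumes pea: "pea p z u" and rdp: "RDP p" and f: "f \<in> JJ p" and g: "g \<in> JJ p"
    and abc: "p a b = Some c"
  shows "Sup (split_sums p f g c) = Sup (split_sums p f g a) + Sup (split_sums p f g b)"
proof -
  let ?S = "split_sums p f g"
  have fs: "signed_measure p f" and gs: "signed_measure p g" using f g JJ_sm by blast+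
  have up: "f a' + g b' \<le> Sup (?S x)" if "p a' b' = Some x" for a' b' x
    using cSup_upper[OF split_sums_mem[of p, OF that] split_sums_bdd[OF f g]] .
  show ?thesis
  proof (rule antisym)
    show "Sup (?S c) \<le> Sup (?S a) + Sup (?S b)"
    proof (rule cSup_least[OF split_sums_nonempty[OF pea]])
      fix e assume "e \<in> ?S c"
      then obtain c1 c2 where cc: "p c1 c2 = Some c" "e = f c1 + g c2" unfolding split_sums_def by blast
      from rdp cc(1) abc obtain d1 d2 d3 d4 where
        d: "p d1 d2 = Some c1" "p d3 d4 = Some c2" "p d1 d3 = Some a" "p d2 d4 = Some b"
        unfolding RDP_def by blast
      have "e = (f d1 + g d3) + (f d2 + g d4)"
        using cc sm_add[OF fs d(1)] sm_add[OF gs d(2)] by simp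
      also have "\<dots> \<le> Sup (?S a) + Sup (?S b)" using up[OF d(3)] up[OF d(4)] by simp
      finally show "e \<le> Sup (?S a) + Sup (?S b)" .
    qed
    show "Sup (?S a) + Sup (?S b) \<le> Sup (?S c)"
    proof (rule Sup_add_le[OF split_sums_nonempty[OF pea] split_sums_nonempty[OF pea]])
      fix e1 e2 assume "e1 \<in> ?S a" "e2 \<in> ?S b"
      then obtain a1 a2 b1 b2 where A: "p a1 a2 = Some a" "e1 = f a1 + g a2"
        and B: "p b1 b2 = Some b" "e2 = f b1 + g b2" unfolding split_sums_def by blast
      obtain k e q where kq: "p a1 b1 = Some k" "p e b2 = Some q" "p k q = Some c"
        and same: "\<forall>\<mu>. signed_measure p \<mu> \<longrightarrow> \<mu> e = \<mu> a2"
        using pea_regroup[OF pea A(1) B(1) abc] by blast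
      have "g e = g a2" using same gs by blast
      have "e1 + e2 = f k + g q" using A B \<open>g e = g a2\<close> sm_add[OF fs kq(1)] sm_add[OF gs kq(2)] by simp
      also have "\<dots> \<le> Sup (?S c)" using up[OF kq(3)] .
      finally show "e1 + e2 \<le> Sup (?S c)" .
    qed
  qed
qed

lemma binary_lub:
  assumes pea: "pea p z u" and rdp: "RDP p" and f: "f \<in> JJ p" and g: "g \<in> JJ p"
  shows "is_lub_in (le_plus p) (JJ p) {f, g} (\<lambda>x. Sup (split_sums p f g x))"
proof -
  define h where "h = (\<lambda>x. Sup (split_sums p f g x))"
  have fs: "signed_measure p f" and gs: "signed_measure p g" using f g JJ_sm by blast+
  have up: "f a + g b \<le> h x" if "p a b = Some x" for a b x
    unfolding h_def using cSup_upper[OF split_sums_mem[of p, OF that] split_sums_bdd[OF f g]] .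
  have hf: "f x \<le> h x" for x using up[OF pea_zero_right[OF pea]] sm_zero[OF pea gs] by simp
  have hg: "g x \<le> h x" for x using up[OF pea_zero_left[OF pea]] sm_zero[OF pea fs] by simp
  have hs: "signed_measure p h"
    unfolding signed_measure_def h_def using split_sums_sup_additive[OF pea rdp f g] by blast
  have hJ: "h \<in> JJ p" using JJ_of_le[OF hs f hf] .
  have least: "le_plus p h v" if v: "v \<in> JJ p" "le_plus p f v" "le_plus p g v" for v
  proof -
    have vs: "signed_measure p v" using v(1) JJ_sm by blast
    have "h x \<le> v x" for x unfolding h_def
    proof (rule cSup_least[OF split_sums_nonempty[OF pea]])
      fix e assume "e \<in> split_sums p f g x"
      then obtain a b where ab: "p a b = Some x" "e = f a + g b" unfolding split_sums_def by blast
      have "f a \<le> v a" "g b \<le> v b" using v(2,3) le_plus_iff[OF fs vs] le_plus_iff[OF gs vs] by blast+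
      then show "e \<le> v x" using ab sm_add[OF vs ab(1)] by simp
    qed
    then show ?thesis using le_plus_iff[OF hs vs] by blast
  qed
  have "le_plus p f h" "le_plus p g h" using hf hg le_plus_iff[OF fs hs] le_plus_iff[OF gs hs] by blast+
  then show ?thesis
    unfolding h_def[symmetric] is_lub_in_def using hJ least by blast
qed

definition decomp_sums :: "('a \<Rightarrow> 'a \<Rightarrow> 'a option) \<Rightarrow> nat \<Rightarrow> (nat \<Rightarrow> 'a \<Rightarrow> real) \<Rightarrow> 'a \<Rightarrow> real set" where
  "decomp_sums p n m x = {(\<Sum>i<n. m i (xs ! i)) | xs. length xs = n \<and> psum p xs = Some x}"

lemma decomp_sums_le:
  assumes v: "signed_measure p v" and mv: "\<And>i y. i < n \<Longrightarrow> m i y \<le> v y"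
    and e: "e \<in> decomp_sums p n m x"
  shows "e \<le> v x"
proof -
  obtain xs where xs: "length xs = n" "psum p xs = Some x" "e = (\<Sum>i<n. m i (xs ! i))"
    using e unfolding decomp_sums_def by blast
  have "e \<le> (\<Sum>i<n. v (xs ! i))" unfolding xs(3) by (rule sum_mono) (simp add: mv)
  also have "\<dots> = v x" using psum_measure[OF v xs(2)] xs(1) by simp
  finally show ?thesis .
qed

lemma decomp_sums_snoc:
  assumes "n \<noteq> 0" "e \<in> decomp_sums p n m a" "p a b = Some x"
  shows "e + m n b \<in> decomp_sums p (Suc n) m x"
proof -
  obtain xs where xs: "length xs = n" "psum p xs = Some a" "e = (\<Sum>i<n. m i (xs ! i))"
    using assms(2) unfolding decomp_sums_def by blast
  have "psum p (xs @ [b]) = Some x" using xs assms(1,3) psum_snoc[of xs p b] by auto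
  moreover have "e + m n b = (\<Sum>i<Suc n. m i ((xs @ [b]) ! i))"
    using xs(1,3) by (simp add: nth_append)
  ultimately show ?thesis using xs(1) unfolding decomp_sums_def by fastforce
qed

lemma decomp_sums_nonempty:
  assumes "pea p z u" "n \<noteq> 0"
  shows "decomp_sums p n m x \<noteq> {}"
proof -
  have "length (x # replicate (n - 1) z) = n" using assms(2) by simp
  then show ?thesis using psum_pad_zero[OF assms(1)] unfolding decomp_sums_def by blast
qed

lemma decomp_sums_one: "decomp_sums p (Suc 0) m x = {m 0 x}"
  unfolding decomp_sums_def by (auto simp: length_Suc_conv intro!: exI[of _ "[x]"])

lemma decomp_sums_Suc_ge:
  assumes pea: "pea p z u" and n: "n \<noteq> 0" and bdd: "bdd_above (decomp_sums p (Suc n) m x)"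
  shows "Sup (split_sums p (\<lambda>a. Sup (decomp_sums p n m a)) (m n) x) \<le> Sup (decomp_sums p (Suc n) m x)"
proof (rule cSup_least[OF split_sums_nonempty[OF pea]])
  fix e' assume "e' \<in> split_sums p (\<lambda>a. Sup (decomp_sums p n m a)) (m n) x"
  then obtain a b where ab: "p a b = Some x" "e' = Sup (decomp_sums p n m a) + m n b"
    unfolding split_sums_def by blast
  have "Sup (decomp_sums p n m a) \<le> Sup (decomp_sums p (Suc n) m x) - m n b"
  proof (rule cSup_least[OF decomp_sums_nonempty[OF pea n]])
    fix e assume "e \<in> decomp_sums p n m a"
    then have "e + m n b \<le> Sup (decomp_sums p (Suc n) m x)"
      using cSup_upper[OF decomp_sums_snoc[of n _ p, OF n _ ab(1)] bdd] by blast
    then show "e \<le> Sup (decomp_sums p (Suc n) m x) - m n b" by simp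
  qed
  then show "e' \<le> Sup (decomp_sums p (Suc n) m x)" using ab(2) by simp
qed

lemma nary_lub:
  assumes pea: "pea p z u" and rdp: "RDP p"
  shows "n \<noteq> 0 \<Longrightarrow> (\<forall>i<n. m i \<in> JJ p) \<Longrightarrow>
    is_lub_in (le_plus p) (JJ p) (m ` {..<n}) (\<lambda>x. Sup (decomp_sums p n m x)) \<and>
    (\<forall>x. bdd_above (decomp_sums p n m x))"
proof (induction n)
  case (Suc n)
  show ?case
  proof (cases "n = 0")
    case True
    have "is_lub_in (le_plus p) (JJ p) {m 0} (m 0)"
      unfolding is_lub_in_def using Suc.prems le_plus_refl by auto
    then show ?thesis using True by (simp add: decomp_sums_one lessThan_Suc)
  next
    case False
    define jn where "jn = (\<lambda>x. Sup (decomp_sums p n m x))"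
    define h where "h = (\<lambda>x. Sup (split_sums p jn (m n) x))"
    have IH: "is_lub_in (le_plus p) (JJ p) (m ` {..<n}) jn"
      using Suc False unfolding jn_def by auto
    have mn: "m n \<in> JJ p" using Suc.prems by simp
    have jn: "jn \<in> JJ p" using IH unfolding is_lub_in_def by blast
    have "is_lub_in (le_plus p) (JJ p) {m n, jn} h"
      using binary_lub[OF pea rdp jn mn] unfolding h_def by (simp add: insert_commute)
    then have lub: "is_lub_in (le_plus p) (JJ p) (m ` {..<Suc n}) h"
      using lub_insert[OF IH] by (simp add: lessThan_Suc)
    then have h: "h \<in> JJ p" unfolding is_lub_in_def by blast
    have below: "m i y \<le> h y" if "i < Suc n" for i y
      using lub that Suc.prems le_plus_JJ[OF _ h] unfolding is_lub_in_def by blast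
    have up: "e \<le> h x" if "e \<in> decomp_sums p (Suc n) m x" for e x
      using decomp_sums_le[OF JJ_sm[OF h] below that] .
    then have bdd: "bdd_above (decomp_sums p (Suc n) m x)" for x by (meson bdd_aboveI)
    have "Sup (decomp_sums p (Suc n) m x) = h x" for x
    proof (rule antisym)
      show "Sup (decomp_sums p (Suc n) m x) \<le> h x"
        using cSup_least[OF decomp_sums_nonempty[OF pea]] up by blast
      show "h x \<le> Sup (decomp_sums p (Suc n) m x)"
        using decomp_sums_Suc_ge[OF pea False bdd] unfolding h_def jn_def .
    qed
    then show ?thesis using lub bdd by (simp add: fun_eq_iff[symmetric])
  qed
qed simp

lemma decomp_sums_uminus: "decomp_sums p n (\<lambda>i. - m i) x = uminus ` decomp_sums p n m x"
  unfolding decomp_sums_def by (auto simp: sum_negf image_iff)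

lemma nary_glb:
  assumes pea: "pea p z u" and rdp: "RDP p" and n: "n \<noteq> 0" and m: "\<forall>i<n. m i \<in> JJ p"
  shows "is_glb_in (le_plus p) (JJ p) (m ` {..<n}) (\<lambda>x. Inf (decomp_sums p n m x)) \<and>
    (\<forall>x. bdd_below (decomp_sums p n m x))"
proof -
  have "\<forall>i<n. - m i \<in> JJ p" using m JJ_uminus by blast
  note lub = nary_lub[OF pea rdp n this]
  have "(\<lambda>i. - m i) ` {..<n} = uminus ` m ` {..<n}" by (simp add: image_image)
  then have "is_glb_in (le_plus p) (JJ p) (m ` {..<n}) (- (\<lambda>x. Sup (decomp_sums p n (\<lambda>i. - m i) x)))"
    using glb_of_lub_uminus lub by metis
  moreover have "- (\<lambda>x. Sup (decomp_sums p n (\<lambda>i. - m i) x)) = (\<lambda>x. Inf (decomp_sums p n m x))"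
    by (simp add: fun_eq_iff decomp_sums_uminus Inf_real_def)
  ultimately show ?thesis using lub by (simp add: decomp_sums_uminus)
qed

lemma finite_lub:
  assumes pea: "pea p z u" and rdp: "RDP p" and F: "finite F" "F \<noteq> {}" "F \<subseteq> JJ p"
  shows "\<exists>l. is_lub_in (le_plus p) (JJ p) F l"
proof -
  obtain n :: nat and m where nm: "F = m ` {i. i < n}" using finite_imp_nat_seg_image_inj_on[OF F(1)] by blast
  then have "n \<noteq> 0" "\<forall>i<n. m i \<in> JJ p" using F(2,3) by auto
  then show ?thesis using nary_lub[OF pea rdp] nm by (metis lessThan_def)
qed

lemma directed_lub:
  assumes L: "L \<subseteq> JJ p" "l0 \<in> L"
    and directed: "\<And>l1 l2. l1 \<in> L \<Longrightarrow> l2 \<in> L \<Longrightarrow> \<exists>l3\<in>L. \<forall>x. l1 x \<le> l3 x \<and> l2 x \<le> l3 x"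
    and bdd: "\<And>x. bdd_above ((\<lambda>l. l x) ` L)"
  shows "is_lub_in (le_plus p) (JJ p) L (\<lambda>x. SUP l\<in>L. l x)"
proof -
  define j where "j = (\<lambda>x. SUP l\<in>L. l x)"
  have ne: "L \<noteq> {}" using L(2) by blast
  have sm: "signed_measure p l" if "l \<in> L" for l using that L(1) JJ_sm by blast
  have up: "l x \<le> j x" if "l \<in> L" for l x unfolding j_def using cSUP_upper[OF that bdd] .
  have "j c = j a + j b" if abc: "p a b = Some c" for a b c
  proof (rule antisym)
    have "l c \<le> j a + j b" if "l \<in> L" for l
      using sm_add[OF sm[OF that] abc] up[OF that, of a] up[OF that, of b] by simp
    then show "j c \<le> j a + j b" by (simp add: j_def cSUP_least[OF ne])
    show "j a + j b \<le> j c" unfolding j_def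
    proof (rule Sup_add_le)
      fix e1 e2 assume "e1 \<in> (\<lambda>l. l a) ` L" "e2 \<in> (\<lambda>l. l b) ` L"
      then obtain l1 l2 where "l1 \<in> L" "l2 \<in> L" "e1 = l1 a" "e2 = l2 b" by blast
      then obtain l3 where "l3 \<in> L" "e1 \<le> l3 a" "e2 \<le> l3 b" using directed by metis
      then show "e1 + e2 \<le> (SUP l\<in>L. l c)"
        using sm_add[OF sm abc] up[of l3 c] unfolding j_def by fastforce
    qed (use ne in auto)
  qed
  then have js: "signed_measure p j" unfolding signed_measure_def by blast
  have jJ: "j \<in> JJ p" using JJ_of_le[OF js _ up[OF L(2)]] L by blast
  have least: "le_plus p j v" if "v \<in> JJ p" "\<forall>l\<in>L. le_plus p l v" for v
  proof -
    have "j x \<le> v x" for x unfolding j_def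
      using that L(1) le_plus_JJ[OF _ that(1)] by (intro cSUP_least[OF ne]) blast
    then show ?thesis using le_plus_iff[OF js JJ_sm[OF that(1)]] by blast
  qed
  have "le_plus p l j" if "l \<in> L" for l using up[OF that] le_plus_iff[OF sm[OF that] js] by blast
  then show ?thesis unfolding is_lub_in_def j_def[symmetric] using jJ least by blast
qed

(* Dedekind completeness: suprema of bounded sets are suprema of their directed finite suprema. *)
lemma dedekind:
  assumes pea: "pea p z u" and rdp: "RDP p"
    and S: "S \<subseteq> JJ p" "S \<noteq> {}" and w: "w \<in> JJ p" "\<forall>s\<in>S. le_plus p s w"
  shows "\<exists>l. is_lub_in (le_plus p) (JJ p) S l"
proof -
  define L where "L = {l. \<exists>F. finite F \<and> F \<noteq> {} \<and> F \<subseteq> S \<and> is_lub_in (le_plus p) (JJ p) F l}"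
  have LJ: "L \<subseteq> JJ p"
  proof
    fix l assume "l \<in> L"
    then obtain F where "is_lub_in (le_plus p) (JJ p) F l" unfolding L_def by blast
    then show "l \<in> JJ p" unfolding is_lub_in_def by blast
  qed
  have SL: "S \<subseteq> L"
  proof
    fix s assume s: "s \<in> S"
    then have "is_lub_in (le_plus p) (JJ p) {s} s" unfolding is_lub_in_def using S(1) le_plus_refl by auto
    then show "s \<in> L" unfolding L_def using s by blast
  qed
  have below_ub: "le_plus p l v" if l: "l \<in> L" and v: "v \<in> JJ p" "\<forall>s\<in>S. le_plus p s v" for l v
  proof -
    obtain F where "F \<subseteq> S" "is_lub_in (le_plus p) (JJ p) F l" using l unfolding L_def by blast
    then show ?thesis using v unfolding is_lub_in_def by blast
  qed
  have directed: "\<exists>l3\<in>L. \<forall>x. l1 x \<le> l3 x \<and> l2 x \<le> l3 x" if l12: "l1 \<in> L" "l2 \<in> L" for l1 l2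
  proof -
    obtain F1 where F1: "finite F1" "F1 \<noteq> {}" "F1 \<subseteq> S" "is_lub_in (le_plus p) (JJ p) F1 l1"
      using l12(1) unfolding L_def by blast
    obtain F2 where F2: "finite F2" "F2 \<subseteq> S" "is_lub_in (le_plus p) (JJ p) F2 l2"
      using l12(2) unfolding L_def by blast
    have F: "finite (F1 \<union> F2)" "F1 \<union> F2 \<noteq> {}" "F1 \<union> F2 \<subseteq> S" using F1 F2 by auto
    obtain l3 where l3: "is_lub_in (le_plus p) (JJ p) (F1 \<union> F2) l3"
      using finite_lub[OF pea rdp F(1,2)] F(3) S(1) by blast
    have "l3 \<in> L" unfolding L_def using F l3 by blast
    moreover have "le_plus p l1 l3" "le_plus p l2 l3"
      using F1(4) F2(3) l3 unfolding is_lub_in_def by auto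
    ultimately show ?thesis using le_plus_JJ LJ l12 by blast
  qed
  have bdd: "bdd_above ((\<lambda>l. l x) ` L)" for x
  proof (rule bdd_aboveI2)
    fix l assume "l \<in> L"
    then show "l x \<le> w x" using below_ub[OF _ w] le_plus_JJ[OF _ w(1)] LJ by blast
  qed
  obtain l0 where "l0 \<in> L" using SL S(2) by blast
  note lub = directed_lub[OF LJ this directed bdd]
  have "(\<forall>l\<in>L. le_plus p l v) \<longleftrightarrow> (\<forall>s\<in>S. le_plus p s v)" if "v \<in> JJ p" for v
    using SL below_ub that by blast
  then show ?thesis using is_lub_in_upper_bounds_cong[OF lub] by blast
qed

lemma riesz:
  assumes pea: "pea p z u" and rdp: "RDP p"
  shows "riesz_space (JJ p) (le_plus p)"
  unfolding riesz_space_def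
proof (intro conjI ballI allI impI)
  show "0 \<in> JJ p" by (rule JJ_zero)
  fix f g assume f: "f \<in> JJ p" and g: "g \<in> JJ p"
  show "f + g \<in> JJ p" using JJ_plus f g .
  show "f + g = g + f" by (rule add.commute)
  show "f = g" if "le_plus p f g \<and> le_plus p g f"
    using that le_plus_JJ[OF f g] le_plus_JJ[OF g f] by (auto simp: fun_eq_iff intro: antisym)
  show "\<exists>l. is_lub_in (le_plus p) (JJ p) {f, g} l" using binary_lub[OF pea rdp f g] by blast
  have "is_lub_in (le_plus p) (JJ p) (uminus ` {f, g}) (\<lambda>x. Sup (split_sums p (- f) (- g) x))"
    using binary_lub[OF pea rdp JJ_uminus[OF f] JJ_uminus[OF g]] by simp
  then show "\<exists>l. is_glb_in (le_plus p) (JJ p) {f, g} l" using glb_of_lub_uminus by blast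
  fix h
  show "le_plus p f h" if "le_plus p f g \<and> le_plus p g h" using that le_plus_trans by blast
  show "le_plus p (f + h) (g + h)" if "le_plus p f g"
  proof -
    have "(g + h) - (f + h) = g - f" by simp
    then show ?thesis using that unfolding le_plus_def by simp
  qed
next
  fix f show "le_plus p f f" by (rule le_plus_refl)
  fix c :: real assume "f \<in> JJ p"
  then show "(\<lambda>x. c * f x) \<in> JJ p" by (rule JJ_scale)
next
  fix f g and c :: real assume "0 \<le> c \<and> le_plus p f g"
  moreover have "(\<lambda>x. c * g x) - (\<lambda>x. c * f x) = (\<lambda>x. c * (g - f) x)" by (simp add: fun_eq_iff algebra_simps)
  ultimately show "le_plus p (\<lambda>x. c * f x) (\<lambda>x. c * g x)"
    using pmeasure_scale[of p "g - f" c] unfolding le_plus_def by simp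
qed

theorem theorem3p6:
  fixes p :: "'a \<Rightarrow> 'a \<Rightarrow> 'a option" and z u :: 'a
  assumes "pea p z u" and "RDP p"
  shows "riesz_space (JJ p) (le_plus p) \<and> dedekind_complete (le_plus p) (JJ p) \<and>
    (\<forall>(n::nat) (m :: nat \<Rightarrow> 'a \<Rightarrow> real). n \<ge> 1 \<and> (\<forall>i<n. m i \<in> JJ p) \<longrightarrow>
       (\<exists>j. is_lub_in (le_plus p) (JJ p) (m ` {..<n}) j \<and>
          (\<forall>x. let D = {(\<Sum>i<n. m i (xs ! i)) | xs. length xs = n \<and> psum p xs = Some x}
               in bdd_above D \<and> j x = Sup D)) \<and>
       (\<exists>k. is_glb_in (le_plus p) (JJ p) (m ` {..<n}) k \<and>
          (\<forall>x. let D = {(\<Sum>i<n. m i (xs ! i)) | xs. length xs = n \<and> psum p xs = Some x}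
               in bdd_below D \<and> k x = Inf D)))"
proof (intro conjI allI impI)
  show "riesz_space (JJ p) (le_plus p)" using riesz[OF assms] .
  show "dedekind_complete (le_plus p) (JJ p)"
    unfolding dedekind_complete_def using dedekind[OF assms] by blast
  fix n :: nat and m :: "nat \<Rightarrow> 'a \<Rightarrow> real"
  assume "1 \<le> n \<and> (\<forall>i<n. m i \<in> JJ p)"
  then have n: "n \<noteq> 0" and m: "\<forall>i<n. m i \<in> JJ p" by auto
  show "\<exists>j. is_lub_in (le_plus p) (JJ p) (m ` {..<n}) j \<and>
          (\<forall>x. let D = {(\<Sum>i<n. m i (xs ! i)) | xs. length xs = n \<and> psum p xs = Some x}
               in bdd_above D \<and> j x = Sup D)"
    unfolding Let_def decomp_sums_def[symmetric] using nary_lub[OF assms n m]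
    by (intro exI[of _ "\<lambda>x. Sup (decomp_sums p n m x)"]) simp
  show "\<exists>k. is_glb_in (le_plus p) (JJ p) (m ` {..<n}) k \<and>
          (\<forall>x. let D = {(\<Sum>i<n. m i (xs ! i)) | xs. length xs = n \<and> psum p xs = Some x}
               in bdd_below D \<and> k x = Inf D)"
    unfolding Let_def decomp_sums_def[symmetric] using nary_glb[OF assms n m]
    by (intro exI[of _ "\<lambda>x. Inf (decomp_sums p n m x)"]) simp
qed

end
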